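(* For all positive integers $k$ and $n$, with $\ell:=\lfloor (k+1)^2/4\rfloor$ and $q:=n\bmod \ell$, \[ \nu_k(K_{k+1,n}) \le q\binom{\frac{n-q}{\ell}+1}{2} + (\ell-q)\binom{\frac{n-q}{\ell}}{2}. \]
   Context: A book with $k$ pages consists of a line (the spine) and $k$ half-planes (the pages) whose common boundary is the spine. A $k$-page drawing of a graph places all vertices on the spine and draws each edge inside a single page (edges may cross). $\nu_k(G)$ is the minimum number of crossings over all $k$-page drawings of $G$. Convention: $\binom{a}{b}=0$ whenever $a<b$. *)

theory Defs
  imports Main
begin

text \<open>The vertices are placed on the
spine in the order given by an injective position map; each edge is put in one of
the pages 0..k-1. Two edges on the same page cross iff their endpoints strictly
interleave along the spine (edges drawn as semicircles, which is optimal).\<close>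

definition crosses :: "('v \<Rightarrow> nat) \<Rightarrow> 'v set \<Rightarrow> 'v set \<Rightarrow> bool" where
  "crosses pos e f \<longleftrightarrow> (\<exists>a b c d. e = {a, b} \<and> f = {c, d} \<and>
      pos a < pos c \<and> pos c < pos b \<and> pos b < pos d)"

definition book_drawing :: "nat \<Rightarrow> 'v set \<Rightarrow> 'v set set \<Rightarrow> ('v \<Rightarrow> nat) \<Rightarrow> ('v set \<Rightarrow> nat) \<Rightarrow> bool" where
  "book_drawing k V E pos page \<longleftrightarrow> inj_on pos V \<and> (\<forall>e\<in>E. page e < k)"

text \<open>Each crossing pair is counted exactly once (the edge whose left endpoint is
further left comes first).\<close>
definition crossings :: "'v set set \<Rightarrow> ('v \<Rightarrow> nat) \<Rightarrow> ('v set \<Rightarrow> nat) \<Rightarrow> nat" where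
  "crossings E pos page = card {(e, f). e \<in> E \<and> f \<in> E \<and> page e = page f \<and> crosses pos e f}"

definition book_crossing_number :: "nat \<Rightarrow> 'v set \<Rightarrow> 'v set set \<Rightarrow> nat" where
  "book_crossing_number k V E =
     Inf {c. \<exists>pos page. book_drawing k V E pos page \<and> c = crossings E pos page}"

definition Kbip_V :: "nat \<Rightarrow> nat \<Rightarrow> (nat + nat) set" where
  "Kbip_V m n = Inl ` {..<m} \<union> Inr ` {..<n}"

definition Kbip_E :: "nat \<Rightarrow> nat \<Rightarrow> (nat + nat) set set" where
  "Kbip_E m n = {{Inl i, Inr j} | i j. i < m \<and> j < n}"

end

theory Submission
  imports Defs "HOL-Library.Product_Lexorder"
begin

text \<open>Place the left vertices \<open>0, \<dots>, k\<close> of the complete bipartite graph on the spine in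
this order, fix \<open>1 \<le> s \<le> k\<close>, and give the right vertex \<open>j\<close> one of the \<open>\<ell> = s (k + 1 - s)\<close>
types \<open>(d, g)\<close> with \<open>d < s < g \<le> k + 1\<close> according to \<open>j mod \<ell>\<close>. A right vertex of type
\<open>(d, g)\<close> sits between the left vertices \<open>g - 1\<close> and \<open>g\<close>, and its edge to \<open>a\<close> goes to page
\<open>(a' + g) mod k\<close>, where \<open>a'\<close> is \<open>a\<close> with \<open>d\<close> and \<open>d + 1\<close> identified. Comparing positions and
pages shows that two edges on a common page cross only if they join right vertices \<open>j < j'\<close>
of the same type to \<open>d\<close> and \<open>d + 1\<close> respectively. Hence there are at most
\<open>\<Sum>j<n. j div \<ell>\<close> crossings; \<open>s = (k + 1) div 2\<close> gives \<open>\<ell> = (k + 1)\<^sup>2 div 4\<close>, and the sum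
evaluates to the stated bound.\<close>

lemma sum_div_lessThan:
  fixes L n :: nat
  shows "(\<Sum>j<n. j div L) = L * ((n div L) choose 2) + (n mod L) * (n div L)"
proof (induction n)
  case 0
  then show ?case by simp
next
  case (Suc n)
  show ?case
  proof (cases "Suc (n mod L) = L")
    case True
    then have "Suc n div L = Suc (n div L)" "Suc n mod L = 0"
      by (simp_all add: div_Suc mod_Suc)
    moreover have "L * (n div L) = n mod L * (n div L) + n div L"
      by (metis True add.commute mult_Suc)
    ultimately show ?thesis
      using Suc.IH by (simp add: numeral_2_eq_2 distrib_left)
  next
    case False
    then have "Suc n div L = n div L" "Suc n mod L = Suc (n mod L)"
      by (auto simp add: div_Suc mod_Suc)
    with Suc.IH show ?thesis by simp
  qed
qed

lemma sum_div_lessThan_choose: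
  fixes L n :: nat
  assumes "L > 0"
  shows "(\<Sum>j<n. j div L) = n mod L * (n div L + 1 choose 2) + (L - n mod L) * (n div L choose 2)"
proof -
  have "n mod L + (L - n mod L) = L"
    using mod_less_divisor[OF assms, of n] by linarith
  then have "L * (n div L choose 2) = n mod L * (n div L choose 2) + (L - n mod L) * (n div L choose 2)"
    by (simp flip: add_mult_distrib)
  moreover have "n div L + 1 choose 2 = (n div L choose 2) + n div L"
    by (simp add: numeral_2_eq_2)
  ultimately show ?thesis
    using sum_div_lessThan[of L n] by (simp add: add_mult_distrib2)
qed

lemma card_less_same_mod:
  fixes L m :: nat
  assumes "L > 0"
  shows "card {j. j < m \<and> j mod L = m mod L} = m div L"
proof -
  let ?S = "{j. j < m \<and> j mod L = m mod L}"
  have m: "m = m div L * L + m mod L" by simp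
  have "inj_on (\<lambda>j. j div L) ?S"
  proof (rule inj_onI)
    fix i j assume "i \<in> ?S" "j \<in> ?S" "i div L = j div L"
    then have "i div L * L + i mod L = j div L * L + j mod L" by simp
    then show "i = j" by simp
  qed
  moreover have "(\<lambda>j. j div L) ` ?S = {..<m div L}"
  proof (intro equalityI subsetI)
    fix i assume "i \<in> (\<lambda>j. j div L) ` ?S"
    then obtain j where j: "j < m" "j mod L = m mod L" "i = j div L" by blast
    have "j = j div L * L + m mod L" using j(2) by (simp flip: j(2))
    with j(1) m have "j div L * L < m div L * L" by linarith
    then show "i \<in> {..<m div L}" using j(3) by simp
  next
    fix i assume "i \<in> {..<m div L}"
    then have "Suc i * L \<le> m div L * L" by (intro mult_le_mono1) simp
    with m mod_less_divisor[OF assms, of m] have "i * L + m mod L < m"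
      unfolding mult_Suc by linarith
    moreover have "(i * L + m mod L) div L = i" using assms by simp
    ultimately show "i \<in> (\<lambda>j. j div L) ` ?S"
      by (intro image_eqI[where x = "i * L + m mod L"]) simp_all
  qed
  ultimately show ?thesis
    using card_image by fastforce
qed

lemma square_div_four: "m\<^sup>2 div 4 = m div 2 * (m - m div 2)" for m :: nat
proof (cases "even m")
  case True
  then obtain t where "m = 2 * t" by blast
  then show ?thesis by (simp add: power2_eq_square)
next
  case False
  then obtain t where "m = 2 * t + 1" by (metis oddE)
  moreover have "(2 * t + 1)\<^sup>2 = 4 * (t * t + t) + 1" by (simp add: power2_eq_square algebra_simps)
  ultimately show ?thesis by simp
qed

lemma mod_eq_nat_cases:
  fixes x y k :: nat
  assumes "x mod k = y mod k" "x < y + 2 * k" "y < x + 2 * k"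
  shows "x = y \<or> x = y + k \<or> y = x + k"
proof (cases "y \<le> x")
  case True
  with assms(1) obtain t where "x = y + k * t" by (metis mod_eq_nat1E)
  with assms(2) have "t < 2" by (cases "t \<ge> 2") (auto dest: mult_le_mono2[of 2 t k])
  then show ?thesis using \<open>x = y + k * t\<close> by (auto simp: less_2_cases_iff)
next
  case False
  with assms(1) obtain t where "y = x + k * t" by (metis mod_eq_nat2E nat_le_linear)
  with assms(3) have "t < 2" by (cases "t \<ge> 2") (auto dest: mult_le_mono2[of 2 t k])
  then show ?thesis using \<open>y = x + k * t\<close> by (auto simp: less_2_cases_iff)
qed

lemma lex_less_iff:
  fixes x y r r' w :: nat
  assumes "r < w" "r' < w"
  shows "x * w + r < y * w + r' \<longleftrightarrow> x < y \<or> x = y \<and> r < r'"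
proof -
  have less: "x * w + r < y * w + r'" if "x < y" "r < w" for x y r r' :: nat
  proof -
    have "x * w + r < Suc x * w" using that by simp
    also have "\<dots> \<le> y * w" using that by (intro mult_le_mono1) simp
    finally show ?thesis by simp
  qed
  show ?thesis
    using less[of x y r r'] less[of y x r' r] assms by (cases x y rule: linorder_cases) auto
qed

lemma book_crossing_number_le:
  assumes "book_drawing k V E pos page"
  shows "book_crossing_number k V E \<le> crossings E pos page"
  unfolding book_crossing_number_def by (rule cInf_lower) (use assms in auto)

lemma crosses_Inl_Inr:
  assumes "crosses pos {Inl a, Inr j} {Inl b, Inr j'}"
  shows "pos (Inl a) < pos (Inl b) \<and> pos (Inl b) < pos (Inr j) \<and> pos (Inr j) < pos (Inr j') \<or>
         pos (Inl a) < pos (Inr j') \<and> pos (Inr j') < pos (Inr j) \<and> pos (Inr j) < pos (Inl b) \<or>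
         pos (Inr j) < pos (Inl b) \<and> pos (Inl b) < pos (Inl a) \<and> pos (Inl a) < pos (Inr j') \<or>
         pos (Inr j) < pos (Inr j') \<and> pos (Inr j') < pos (Inl a) \<and> pos (Inl a) < pos (Inl b)"
  using assms unfolding crosses_def doubleton_eq_iff by auto

definition left_end :: "('a + 'b) set \<Rightarrow> 'a" where
  "left_end e = (THE a. Inl a \<in> e)"

definition right_end :: "('a + 'b) set \<Rightarrow> 'b" where
  "right_end e = (THE j. Inr j \<in> e)"

lemma left_end_simp [simp]: "left_end {Inl a, Inr j} = a"
  unfolding left_end_def by (rule the_equality) auto

lemma right_end_simp [simp]: "right_end {Inl a, Inr j} = j"
  unfolding right_end_def by (rule the_equality) auto

definition merge_at :: "nat \<Rightarrow> nat \<Rightarrow> nat" where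
  "merge_at d a = (if a \<le> d then a else a - 1)"

text \<open>The four disjuncts of \<open>interleaved\<close> are the four interleavings of the edges \<open>{a, j}\<close> and
  \<open>{b, j'}\<close> in the layout below, where a left vertex \<open>a\<close> precedes a right vertex of gap \<open>g\<close>
  iff \<open>a < g\<close>, and right vertices are ordered lexicographically by gap, slot and index.\<close>

lemma interleaved_same_page:
  fixes a b d d' g g' j j' k s :: nat
  assumes "d < s" "d' < s" "s < g" "g \<le> k + 1" "s < g'" "g' \<le> k + 1" "a \<le> k" "b \<le> k"
    and page: "(merge_at d a + g) mod k = (merge_at d' b + g') mod k"
    and interleaved:
      "a < b \<and> b < g \<and> (g, d, j) < (g', d', j') \<or>
       a < g' \<and> (g', d', j') < (g, d, j) \<and> g \<le> b \<or>
       g \<le> b \<and> b < a \<and> a < g' \<or>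
       (g, d, j) < (g', d', j') \<and> g' \<le> a \<and> a < b"
  shows "g = g' \<and> d = d' \<and> j < j' \<and> a = d \<and> b = d + 1"
proof -
  have ma: "a \<le> d \<and> merge_at d a = a \<or> d < a \<and> merge_at d a + 1 = a"
    and mb: "b \<le> d' \<and> merge_at d' b = b \<or> d' < b \<and> merge_at d' b + 1 = b"
    unfolding merge_at_def by auto
  have "merge_at d a + g = merge_at d' b + g' \<or>
        merge_at d a + g = merge_at d' b + g' + k \<or>
        merge_at d' b + g' = merge_at d a + g + k"
    by (rule mod_eq_nat_cases[OF page]) (use assms(1-8) ma mb in linarith)+
  then show ?thesis
    using interleaved ma mb unfolding less_prod_simp
    by (elim disjE conjE; use assms(1-8) in linarith)
qed

locale bipartite_book_layout =
  fixes k s n :: nat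
  assumes s_pos: "1 \<le> s" and s_le: "s \<le> k"
begin

definition type_count :: nat where
  "type_count = s * (k + 1 - s)"

definition slot :: "nat \<Rightarrow> nat" where
  "slot j = j mod type_count mod s"

definition gap :: "nat \<Rightarrow> nat" where
  "gap j = s + 1 + j mod type_count div s"

text \<open>Right vertices with gap \<open>g\<close> lie strictly between the left vertices \<open>g - 1\<close> and \<open>g\<close>,
  ordered by slot and then by index.\<close>

definition pos :: "nat + nat \<Rightarrow> nat" where
  "pos = case_sum (\<lambda>a. a * (s * n + 1)) (\<lambda>j. (gap j - 1) * (s * n + 1) + (1 + slot j * n + j))"

definition page :: "(nat + nat) set \<Rightarrow> nat" where
  "page e = (merge_at (slot (right_end e)) (left_end e) + gap (right_end e)) mod k"

lemma type_count_pos: "0 < type_count"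
  unfolding type_count_def using s_pos s_le by simp

lemma slot_less: "slot j < s"
  unfolding slot_def using s_pos by simp

lemma gap_greater: "s < gap j"
  unfolding gap_def by simp

lemma gap_le: "gap j \<le> k + 1"
proof -
  have "j mod type_count < (k + 1 - s) * s"
    using type_count_pos unfolding type_count_def by (simp add: mult.commute)
  then have "j mod type_count div s < k + 1 - s"
    by (rule less_mult_imp_div_less)
  then show ?thesis unfolding gap_def by linarith
qed

lemma slot_gap_eq_imp_mod_eq:
  assumes "slot j = slot j'" "gap j = gap j'"
  shows "j mod type_count = j' mod type_count"
  using assms unfolding slot_def gap_def by (metis add_left_cancel div_mult_mod_eq)

lemma pos_offset_less:
  assumes "j < n"
  shows "1 + slot j * n + j < s * n + 1"
proof -
  have "Suc (slot j) * n \<le> s * n"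
    using slot_less by (intro mult_le_mono1) (simp add: Suc_le_eq)
  then show ?thesis using assms by simp
qed

lemma pos_Inl_less_Inl: "pos (Inl a) < pos (Inl b) \<longleftrightarrow> a < b"
  unfolding pos_def sum.case mult_less_cancel2 by simp

lemma pos_Inl_less_Inr:
  assumes "j < n"
  shows "pos (Inl a) < pos (Inr j) \<longleftrightarrow> a < gap j"
  using lex_less_iff[OF _ pos_offset_less[OF assms], of 0 a "gap j - 1"] gap_greater[of j]
  unfolding pos_def by auto

lemma pos_Inr_less_Inl:
  assumes "j < n"
  shows "pos (Inr j) < pos (Inl a) \<longleftrightarrow> gap j \<le> a"
  using lex_less_iff[OF pos_offset_less[OF assms], of 0 "gap j - 1" a] gap_greater[of j]
  unfolding pos_def by auto

lemma pos_Inr_less_Inr: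
  assumes "j < n" "j' < n"
  shows "pos (Inr j) < pos (Inr j') \<longleftrightarrow> (gap j, slot j, j) < (gap j', slot j', j')"
proof -
  have "slot j * n + j < slot j' * n + j' \<longleftrightarrow> slot j < slot j' \<or> slot j = slot j' \<and> j < j'"
    by (rule lex_less_iff[OF assms])
  then show ?thesis
    using lex_less_iff[OF pos_offset_less[OF assms(1)] pos_offset_less[OF assms(2)],
        of "gap j - 1" "gap j' - 1"] gap_greater[of j] gap_greater[of j']
    unfolding pos_def by auto
qed

lemma inj_on_pos: "inj_on pos (Kbip_V (k + 1) n)"
proof -
  have "pos x < pos y \<or> pos y < pos x"
    if "x \<in> Kbip_V (k + 1) n" "y \<in> Kbip_V (k + 1) n" "x \<noteq> y" for x y
  proof (cases x; cases y)
    fix a b assume "x = Inl a" "y = Inl b"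
    then show ?thesis using \<open>x \<noteq> y\<close> by (auto simp: pos_Inl_less_Inl)
  next
    fix a j assume "x = Inl a" "y = Inr j"
    then show ?thesis using that(2) by (auto simp: Kbip_V_def pos_Inl_less_Inr pos_Inr_less_Inl)
  next
    fix j a assume "x = Inr j" "y = Inl a"
    then show ?thesis using that(1) by (auto simp: Kbip_V_def pos_Inl_less_Inr pos_Inr_less_Inl)
  next
    fix j j' assume "x = Inr j" "y = Inr j'"
    then show ?thesis using that by (auto simp: Kbip_V_def pos_Inr_less_Inr)
  qed
  then show ?thesis by (metis inj_onI less_irrefl)
qed

lemma is_book_drawing: "book_drawing k (Kbip_V (k + 1) n) (Kbip_E (k + 1) n) pos page"
  unfolding book_drawing_def page_def using inj_on_pos s_pos s_le by auto

lemma crossing_edges: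
  assumes "a \<le> k" "b \<le> k" "j < n" "j' < n"
    and same_page: "page {Inl a, Inr j} = page {Inl b, Inr j'}"
    and cross: "crosses pos {Inl a, Inr j} {Inl b, Inr j'}"
  shows "j < j' \<and> j mod type_count = j' mod type_count \<and> a = slot j \<and> b = Suc (slot j)"
proof -
  have "gap j = gap j' \<and> slot j = slot j' \<and> j < j' \<and> a = slot j \<and> b = slot j + 1"
  proof (rule interleaved_same_page[OF slot_less slot_less gap_greater gap_le gap_greater gap_le assms(1,2)])
    show "(merge_at (slot j) a + gap j) mod k = (merge_at (slot j') b + gap j') mod k"
      using same_page unfolding page_def by simp
    show "a < b \<and> b < gap j \<and> (gap j, slot j, j) < (gap j', slot j', j') \<or>
      a < gap j' \<and> (gap j', slot j', j') < (gap j, slot j, j) \<and> gap j \<le> b \<or>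
      gap j \<le> b \<and> b < a \<and> a < gap j' \<or>
      (gap j, slot j, j) < (gap j', slot j', j') \<and> gap j' \<le> a \<and> a < b"
      using crosses_Inl_Inr[OF cross] assms(3,4)
      by (simp only: pos_Inl_less_Inl pos_Inl_less_Inr pos_Inr_less_Inl pos_Inr_less_Inr)
  qed
  with slot_gap_eq_imp_mod_eq[of j j'] show ?thesis by simp
qed

lemma crossings_le: "crossings (Kbip_E (k + 1) n) pos page \<le> (\<Sum>j<n. j div type_count)"
proof -
  define P where "P = (SIGMA j':{..<n}. {j. j < j' \<and> j mod type_count = j' mod type_count})"
  let ?edges = "\<lambda>(j', j). ({Inl (slot j), Inr j}, {Inl (Suc (slot j)), Inr j'})"
  have finite_P: "finite P"
    unfolding P_def by simp
  have crossing_pairs: "{(e, f). e \<in> Kbip_E (k + 1) n \<and> f \<in> Kbip_E (k + 1) n \<and> page e = page f \<and> crosses pos e f}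
        \<subseteq> ?edges ` P"
  proof (clarify)
    fix e f assume "e \<in> Kbip_E (k + 1) n" "f \<in> Kbip_E (k + 1) n" and same_page: "page e = page f"
      and cross: "crosses pos e f"
    then obtain a b j j' where e: "e = {Inl a, Inr j}" "a \<le> k" "j < n"
      and f: "f = {Inl b, Inr j'}" "b \<le> k" "j' < n"
      unfolding Kbip_E_def by auto
    have "j < j' \<and> j mod type_count = j' mod type_count \<and> a = slot j \<and> b = Suc (slot j)"
      using crossing_edges[OF e(2) f(2) e(3) f(3)] same_page cross unfolding e(1) f(1) by blast
    then have "(j', j) \<in> P" "(e, f) = ?edges (j', j)"
      unfolding P_def e(1) f(1) using f(3) by auto
    then show "(e, f) \<in> ?edges ` P" by blast
  qed
  have "crossings (Kbip_E (k + 1) n) pos page \<le> card (?edges ` P)"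
    unfolding crossings_def by (rule card_mono[OF finite_imageI[OF finite_P] crossing_pairs])
  also have "\<dots> \<le> card P"
    by (rule card_image_le[OF finite_P])
  also have "card P = (\<Sum>j'<n. card {j. j < j' \<and> j mod type_count = j' mod type_count})"
    unfolding P_def by (rule card_SigmaI) auto
  also have "\<dots> = (\<Sum>j'<n. j' div type_count)"
    using card_less_same_mod[OF type_count_pos] by simp
  finally show ?thesis .
qed

theorem book_crossing_number_Kbip_le:
  "book_crossing_number k (Kbip_V (k + 1) n) (Kbip_E (k + 1) n) \<le> (\<Sum>j<n. j div type_count)"
  using book_crossing_number_le[OF is_book_drawing] crossings_le by (rule le_trans)

end

theorem lemma20:
  fixes k n :: nat
  assumes "k \<ge> 1" and "n \<ge> 1"
  defines "l \<equiv> (k + 1)^2 div 4"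
  defines "q \<equiv> n mod l"
  shows "book_crossing_number k (Kbip_V (k + 1) n) (Kbip_E (k + 1) n)
           \<le> q * (((n - q) div l + 1) choose 2) + (l - q) * (((n - q) div l) choose 2)"
proof -
  interpret bipartite_book_layout k "(k + 1) div 2" n
    using assms(1) by unfold_locales auto
  have l: "l = type_count"
    unfolding l_def type_count_def by (rule square_div_four)
  have "(n - q) div l = n div l"
    unfolding q_def by (simp add: minus_mod_eq_div_mult)
  then have "q * (((n - q) div l + 1) choose 2) + (l - q) * (((n - q) div l) choose 2) = (\<Sum>j<n. j div l)"
    unfolding q_def using sum_div_lessThan_choose[OF type_count_pos[folded l]] by simp
  with book_crossing_number_Kbip_le show ?thesis unfolding l by simp
qed

end
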